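(* Let $(p_{i,j})_{1\le i\le j\le n}$ and $(p'_{i,j})_{1\le i\le j\le n}$ be two reduced families of primitive elements of ${\cal H}_R$, and let $(c_0,\dots,c_k)$ be the type of $(p_{i,j})$, with associated matrices ${\cal P},{\cal P}'$. Then $C_{(p_{i,j})}$ and $C_{(p'_{i,j})}$ are isomorphic comodules if and only if $(p_{i,j})$ and $(p'_{i,j})$ have the same type and there exists $g\in G_{(c_0,\dots,c_k)}$ such that ${\cal P}'=g{\cal P}g^{-1}$.
   Context: A rooted tree is a finite connected and simply connected graph with a distinguished vertex (the root), edges oriented away from the root. ${\cal H}_R$ is the commutative polynomial algebra over $\mathbb{Q}$ on the isomorphism classes of rooted trees; monomials are forests ($1$ is the empty forest), weight = number of vertices. An admissible cut $C$ of a tree $t$ is a nonempty set of edges such that every path from the root to a vertex contains at most one edge of $C$; removing them gives a forest with $R^C(t)$ the tree containing the root and $P^C(t)$ the product of the others. Coproduct: algebra morphism $\Delta$ with $\Delta(t)=1\otimes t+t\otimes1+\sum_CP^C(t)\otimes R^C(t)$; $Prim({\cal H}_R)$ = primitive elements. For forests $M,N$: $M\top N=0$ if $N=1$, else $M\top N=\frac{1}{weight(N)}\sum_vN_v$, $v$ over vertices of $N$, $N_v$ obtained by attaching every tree of $M$ to $v$; bilinear extension; $p_k\top\cdots\top p_1:=(p_k\top\cdots\top p_2)\top p_1$. ${\cal D}_{i,j}$ = set of partitions of $\{i,\dots,j\}$ into consecutive intervals $I_{i_1,j_1}\cdots I_{i_k,j_k}$ ($i=i_1\le j_1$, $i_{r+1}=j_r+1$,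 $j_k=j$). For a family $(p_{i,j})_{1\le i\le j\le n}$ of primitive elements, $C_{(p_{i,j})}$ is the left comodule with basis $e_0,\dots,e_n$, $\Delta(e_0)=1\otimes e_0$, $\Delta(e_i)=\sum_{j=0}^{i-1}\big(\sum_{{\cal D}_{j+1,i}}p_{i_k,j_k}\top\cdots\top p_{i_1,j_1}\big)\otimes e_j+1\otimes e_i$. The associated matrix ${\cal P}\in{\cal M}_{n+1}(Prim({\cal H}_R))$ (rows and columns indexed $0,\dots,n$) has entry $p_{r+1,c}$ at position $(r,c)$ if $c\ge r+1$, and $0$ otherwise. The family is reduced of type $(c_0,\dots,c_k)$ (positive integers with $c_0+\cdots+c_k=n+1$) if, cutting rows and columns into consecutive blocks of sizes $c_0,\dots,c_k$, all blocks on or below the block diagonal are zero and, for each $i=1,\dots,k$, the block in block-row $i-1$ and block-column $i$ (of size $c_{i-1}\times c_i$) has its $c_i$ columns linearly independent as elements of $Prim({\cal H}_R)^{c_{i-1}}$. $G_{(c_0,\dots,c_k)}\subset GL_{n+1}(\mathbb{Q})$ is the group of block upper triangular matrices with respect to these blocks whose diagonal blocks lie in $GL_{c_i}(\mathbb{Q})$; it acts by $g\cdot{\cal P}=g{\cal P}g^{-1}$. *)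

theory Defs
  imports Complex_Main "HOL-Library.Multiset" "HOL-Library.Poly_Mapping" "HOL-Library.Product_Plus"
begin

text \<open>Isomorphism classes of rooted trees: a root together with the (unordered)
 multiset of subtrees hanging at its children.\<close>
datatype tree = Node "tree multiset"

type_synonym forest = "tree multiset"

text \<open>H_R = commutative polynomial algebra over Q on trees = monoid algebra of the
 free commutative monoid of forests; the empty forest is 1.\<close>
type_synonym HR = "forest \<Rightarrow>\<^sub>0 rat"

text \<open>H_R \<otimes> H_R with basis forest \<otimes> forest (product componentwise).\<close>
type_synonym HR2 = "(forest \<times> forest) \<Rightarrow>\<^sub>0 rat"

primrec tweight :: "tree \<Rightarrow> nat" where
  "tweight (Node F) = Suc (sum_mset (image_mset tweight F))"

definition fweight :: "forest \<Rightarrow> nat" where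
  "fweight F = sum_mset (image_mset tweight F)"

definition scal :: "rat \<Rightarrow> ('a \<Rightarrow>\<^sub>0 rat) \<Rightarrow> ('a \<Rightarrow>\<^sub>0 rat)" where
  "scal c x = Poly_Mapping.map ((*) c) x"

definition tens :: "HR \<Rightarrow> HR \<Rightarrow> HR2" where
  "tens a b = (\<Sum>F\<in>Poly_Mapping.keys a. \<Sum>G\<in>Poly_Mapping.keys b. Poly_Mapping.single (F, G) (Poly_Mapping.lookup a F * Poly_Mapping.lookup b G))"

text \<open>Convolution of multisets of pairs of forests (combining independent choices).\<close>
definition mconv :: "(forest \<times> forest) multiset \<Rightarrow> (forest \<times> forest) multiset \<Rightarrow> (forest \<times> forest) multiset" where
  "mconv A B = sum_mset (image_mset (\<lambda>a. image_mset (\<lambda>b. a + b) B) A)"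

definition mconv_all :: "(forest \<times> forest) multiset multiset \<Rightarrow> (forest \<times> forest) multiset" where
  "mconv_all M = fold_mset mconv {#({#}, {#})#} M"

text \<open>acuts t: multiset, indexed by all sets C of edges of t (the empty set included)
 such that every path from the root contains at most one edge of C, of the pairs
 (P^C(t), R^C(t)).  An edge set of Node F is given by choosing, for each child
 subtree s, either to cut the edge from the root to s (then s falls entirely into
 P and nothing below may be cut), or not to cut it and to choose such an edge set
 inside s.\<close>
primrec acuts :: "tree \<Rightarrow> (forest \<times> tree) multiset" where
  "acuts (Node F) =
     image_mset (\<lambda>(P, K). (P, Node K))
       (mconv_all (image_mset (\<lambda>s. {#({#s#}, {#})#} +
            image_mset (\<lambda>(P, R). (P, {#R#})) (acuts s)) F))"

text \<open>Nonempty admissible cuts: remove the empty cut, whose pair is (1, t).\<close>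
definition adm_cuts :: "tree \<Rightarrow> (forest \<times> tree) multiset" where
  "adm_cuts t = acuts t - {#({#}, t)#}"

definition Delta_tree :: "tree \<Rightarrow> HR2" where
  "Delta_tree t = Poly_Mapping.single ({#}, {#t#}) 1 + Poly_Mapping.single ({#t#}, {#}) 1
     + sum_mset (image_mset (\<lambda>(P, R). Poly_Mapping.single (P, {#R#}) 1) (adm_cuts t))"

definition Delta_forest :: "forest \<Rightarrow> HR2" where
  "Delta_forest F = prod_mset (image_mset Delta_tree F)"

definition Delta :: "HR \<Rightarrow> HR2" where
  "Delta h = (\<Sum>F\<in>Poly_Mapping.keys h. scal (Poly_Mapping.lookup h F) (Delta_forest F))"

definition Prim :: "HR set" where
  "Prim = {p. Delta p = tens 1 p + tens p 1}"

text \<open>graft_tree M t: multiset over the vertices v of t of t_v (all trees of M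
 attached to v).\<close>
primrec graft_tree :: "forest \<Rightarrow> tree \<Rightarrow> tree multiset" where
  "graft_tree M (Node F) =
     {#Node (F + M)#} +
     sum_mset (image_mset (\<lambda>(s, G). image_mset (\<lambda>s'. Node (F - {#s#} + {#s'#})) G)
        (image_mset (\<lambda>s. (s, graft_tree M s)) F))"

definition graft_forest :: "forest \<Rightarrow> forest \<Rightarrow> forest multiset" where
  "graft_forest M N = sum_mset (image_mset (\<lambda>t. image_mset (\<lambda>t'. N - {#t#} + {#t'#}) (graft_tree M t)) N)"

definition top_forest :: "forest \<Rightarrow> forest \<Rightarrow> HR" where
  "top_forest M N = (if N = {#} then 0 else
      scal (1 / of_nat (fweight N)) (sum_mset (image_mset (\<lambda>N'. Poly_Mapping.single N' 1) (graft_forest M N))))"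

definition top :: "HR \<Rightarrow> HR \<Rightarrow> HR" (infixl "\<top>" 70) where
  "a \<top> b = (\<Sum>M\<in>Poly_Mapping.keys a. \<Sum>N\<in>Poly_Mapping.keys b. scal (Poly_Mapping.lookup a M * Poly_Mapping.lookup b N) (top_forest M N))"

text \<open>D_{a,b}: lists [(i_1,j_1),...,(i_k,j_k)] of consecutive intervals covering {a..b}.\<close>
definition Dset :: "nat \<Rightarrow> nat \<Rightarrow> (nat \<times> nat) list set" where
  "Dset a b = {xs. xs \<noteq> [] \<and> fst (xs ! 0) = a \<and> snd (last xs) = b
       \<and> (\<forall>r < length xs. fst (xs ! r) \<le> snd (xs ! r))
       \<and> (\<forall>r. Suc r < length xs \<longrightarrow> fst (xs ! Suc r) = Suc (snd (xs ! r)))}"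

text \<open>top_iter p [(i_1,j_1),...,(i_k,j_k)] = p_{i_k,j_k} top ... top p_{i_1,j_1},
 bracketed as (p_k top ... top p_2) top p_1.\<close>
fun top_iter :: "(nat \<Rightarrow> nat \<Rightarrow> HR) \<Rightarrow> (nat \<times> nat) list \<Rightarrow> HR" where
  "top_iter p [] = 0"
| "top_iter p [x] = p (fst x) (snd x)"
| "top_iter p (x # y # xs) = top_iter p (y # xs) \<top> p (fst x) (snd x)"

text \<open>Coefficient of e_j in Delta(e_i).\<close>
definition coef :: "(nat \<Rightarrow> nat \<Rightarrow> HR) \<Rightarrow> nat \<Rightarrow> nat \<Rightarrow> HR" where
  "coef p i j = (if j < i then (\<Sum>xs\<in>Dset (Suc j) i. top_iter p xs)
                 else if j = i then 1 else 0)"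

text \<open>The comodule C_(p): the Q-vector space with basis e_0..e_n, elements are
 finitely supported coefficient functions on {0..n}; H_R \<otimes> C has basis
 (forest, j).\<close>
definition Cspace :: "nat \<Rightarrow> (nat \<Rightarrow>\<^sub>0 rat) set" where
  "Cspace n = {x. Poly_Mapping.keys x \<subseteq> {..n}}"

definition tensC :: "HR \<Rightarrow> (nat \<Rightarrow>\<^sub>0 rat) \<Rightarrow> ((forest \<times> nat) \<Rightarrow>\<^sub>0 rat)" where
  "tensC h x = (\<Sum>F\<in>Poly_Mapping.keys h. \<Sum>j\<in>Poly_Mapping.keys x. Poly_Mapping.single (F, j) (Poly_Mapping.lookup h F * Poly_Mapping.lookup x j))"

definition coact_basis :: "(nat \<Rightarrow> nat \<Rightarrow> HR) \<Rightarrow> nat \<Rightarrow> ((forest \<times> nat) \<Rightarrow>\<^sub>0 rat)" where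
  "coact_basis p i = (\<Sum>j\<le>i. tensC (coef p i j) (Poly_Mapping.single j 1))"

definition coact :: "(nat \<Rightarrow> nat \<Rightarrow> HR) \<Rightarrow> (nat \<Rightarrow>\<^sub>0 rat) \<Rightarrow> ((forest \<times> nat) \<Rightarrow>\<^sub>0 rat)" where
  "coact p x = (\<Sum>i\<in>Poly_Mapping.keys x. scal (Poly_Mapping.lookup x i) (coact_basis p i))"

text \<open>id \<otimes> phi on H_R \<otimes> C, for a linear phi (determined by the images of basis vectors).\<close>
definition id_tens :: "((nat \<Rightarrow>\<^sub>0 rat) \<Rightarrow> (nat \<Rightarrow>\<^sub>0 rat)) \<Rightarrow> ((forest \<times> nat) \<Rightarrow>\<^sub>0 rat) \<Rightarrow> ((forest \<times> nat) \<Rightarrow>\<^sub>0 rat)" where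
  "id_tens \<phi> y = (\<Sum>(F, j)\<in>Poly_Mapping.keys y. scal (Poly_Mapping.lookup y (F, j))
       (tensC (Poly_Mapping.single F 1) (\<phi> (Poly_Mapping.single j 1))))"

definition lin_on :: "nat \<Rightarrow> ((nat \<Rightarrow>\<^sub>0 rat) \<Rightarrow> (nat \<Rightarrow>\<^sub>0 rat)) \<Rightarrow> bool" where
  "lin_on n \<phi> \<longleftrightarrow> (\<forall>x\<in>Cspace n. \<forall>y\<in>Cspace n. \<phi> (x + y) = \<phi> x + \<phi> y)
                  \<and> (\<forall>c. \<forall>x\<in>Cspace n. \<phi> (scal c x) = scal c (\<phi> x))"

definition comod_iso :: "nat \<Rightarrow> (nat \<Rightarrow> nat \<Rightarrow> HR) \<Rightarrow> (nat \<Rightarrow> nat \<Rightarrow> HR) \<Rightarrow> bool" where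
  "comod_iso n p p' \<longleftrightarrow> (\<exists>\<phi>. lin_on n \<phi> \<and> bij_betw \<phi> (Cspace n) (Cspace n)
       \<and> (\<forall>x\<in>Cspace n. coact p' (\<phi> x) = id_tens \<phi> (coact p x)))"

definition prim_family :: "nat \<Rightarrow> (nat \<Rightarrow> nat \<Rightarrow> HR) \<Rightarrow> bool" where
  "prim_family n p \<longleftrightarrow> (\<forall>i j. 1 \<le> i \<and> i \<le> j \<and> j \<le> n \<longrightarrow> p i j \<in> Prim)"

text \<open>Associated matrix, rows/columns 0..n.\<close>
definition assoc_mat :: "(nat \<Rightarrow> nat \<Rightarrow> HR) \<Rightarrow> nat \<Rightarrow> nat \<Rightarrow> HR" where
  "assoc_mat p r c = (if Suc r \<le> c then p (Suc r) c else 0)"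

text \<open>Start index of block i for block sizes cs = [c_0,...,c_k].\<close>
definition bstart :: "nat list \<Rightarrow> nat \<Rightarrow> nat" where
  "bstart cs i = sum_list (take i cs)"

definition blk :: "nat list \<Rightarrow> nat \<Rightarrow> nat set" where
  "blk cs i = {bstart cs i ..< bstart cs (Suc i)}"

definition is_type :: "nat \<Rightarrow> nat list \<Rightarrow> bool" where
  "is_type n cs \<longleftrightarrow> cs \<noteq> [] \<and> (\<forall>c\<in>set cs. 0 < c) \<and> sum_list cs = Suc n"

definition reduced_of_type :: "nat \<Rightarrow> (nat \<Rightarrow> nat \<Rightarrow> HR) \<Rightarrow> nat list \<Rightarrow> bool" where
  "reduced_of_type n p cs \<longleftrightarrow> is_type n cs
     \<and> (\<forall>a<length cs. \<forall>b<length cs. b \<le> a \<longrightarrow>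
          (\<forall>r\<in>blk cs a. \<forall>c\<in>blk cs b. assoc_mat p r c = 0))
     \<and> (\<forall>i. 1 \<le> i \<and> i < length cs \<longrightarrow>
          (\<forall>lam :: nat \<Rightarrow> rat.
             (\<forall>r\<in>blk cs (i - 1). (\<Sum>c\<in>blk cs i. scal (lam c) (assoc_mat p r c)) = 0)
             \<longrightarrow> (\<forall>c\<in>blk cs i. lam c = 0)))"

definition is_reduced :: "nat \<Rightarrow> (nat \<Rightarrow> nat \<Rightarrow> HR) \<Rightarrow> bool" where
  "is_reduced n p \<longleftrightarrow> (\<exists>cs. reduced_of_type n p cs)"

definition mat_inverse_on :: "nat set \<Rightarrow> (nat \<Rightarrow> nat \<Rightarrow> rat) \<Rightarrow> (nat \<Rightarrow> nat \<Rightarrow> rat) \<Rightarrow> bool" where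
  "mat_inverse_on I g h \<longleftrightarrow>
     (\<forall>r\<in>I. \<forall>c\<in>I. (\<Sum>k\<in>I. g r k * h k c) = (if r = c then 1 else 0))
   \<and> (\<forall>r\<in>I. \<forall>c\<in>I. (\<Sum>k\<in>I. h r k * g k c) = (if r = c then 1 else 0))"

text \<open>G_(c_0,...,c_k): invertible (n+1)x(n+1) rational matrices, block upper triangular
 with respect to the blocks, with invertible diagonal blocks.\<close>
definition Gtype :: "nat \<Rightarrow> nat list \<Rightarrow> (nat \<Rightarrow> nat \<Rightarrow> rat) set" where
  "Gtype n cs = {g. (\<exists>h. mat_inverse_on {..n} g h)
      \<and> (\<forall>a<length cs. \<forall>b<length cs. b < a \<longrightarrow> (\<forall>r\<in>blk cs a. \<forall>c\<in>blk cs b. g r c = 0))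
      \<and> (\<forall>a<length cs. \<exists>h. mat_inverse_on (blk cs a) g h)}"

definition conj_mat :: "nat \<Rightarrow> (nat \<Rightarrow> nat \<Rightarrow> rat) \<Rightarrow> (nat \<Rightarrow> nat \<Rightarrow> HR) \<Rightarrow> (nat \<Rightarrow> nat \<Rightarrow> rat) \<Rightarrow> nat \<Rightarrow> nat \<Rightarrow> HR" where
  "conj_mat n g P h r c = (\<Sum>k\<le>n. \<Sum>l\<le>n. scal (g r k * h l c) (P k l))"

end

theory Submission
  imports Defs
begin

text \<open>
  Record the coaction of \<open>C(p)\<close> in the strictly triangular matrix \<open>M\<close> of its
  coefficients. A linear automorphism with matrix \<open>g\<close> is a comodule isomorphism
  \<open>C(p) \<rightarrow> C(p')\<close> iff \<open>M' g = g M\<close>. Splitting off the first interval of a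
  partition gives \<open>M = P + M \<top> P\<close>, an equation which determines either of \<open>M\<close>, \<open>P\<close> from
  the other and, \<open>\<top>\<close> being bilinear, is compatible with conjugation by scalar matrices.
  Hence the comodules are isomorphic iff \<open>P' = g P g\<^sup>-\<^sup>1\<close> for an invertible \<open>g\<close>.
  The independence of columns required of reduced families then forces \<open>g\<close> to map the flag
  spanned by the blocks of the type of \<open>p\<close> into the one of \<open>p'\<close>, and \<open>g\<^sup>-\<^sup>1\<close> back; comparing
  traces shows that the two types coincide, so \<open>g\<close> lies in the group \<open>G\<close> of the type.
\<close>

lemma lookup_scal [simp]: "Poly_Mapping.lookup (scal c x) k = c * Poly_Mapping.lookup x k"
  by (simp add: scal_def Poly_Mapping.map.rep_eq when_def)

lemma scal_add_right: "scal c (x + y) = scal c x + scal c y"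
  by (rule poly_mapping_eqI) (simp add: lookup_add algebra_simps)

lemma scal_add_left: "scal (c + d) x = scal c x + scal d x"
  by (rule poly_mapping_eqI) (simp add: lookup_add algebra_simps)

lemma scal_scal [simp]: "scal c (scal d x) = scal (c * d) x"
  by (rule poly_mapping_eqI) simp

lemma scal_one [simp]: "scal 1 x = x"
  by (rule poly_mapping_eqI) simp

lemma scal_zero_left [simp]: "scal 0 x = 0"
  by (rule poly_mapping_eqI) simp

lemma scal_zero_right [simp]: "scal c 0 = 0"
  by (rule poly_mapping_eqI) simp

lemma scal_sum_right: "scal c (sum f A) = (\<Sum>a\<in>A. scal c (f a))"
  by (rule poly_mapping_eqI) (simp add: lookup_sum sum_distrib_left)

lemma scal_sum_left: "scal (sum f A) x = (\<Sum>a\<in>A. scal (f a) x)"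
  by (rule poly_mapping_eqI) (simp add: lookup_sum sum_distrib_right)

lemma keys_scal: "Poly_Mapping.keys (scal c x) \<subseteq> Poly_Mapping.keys x"
  by (auto simp: in_keys_iff)

lemma top_eq_sum_over_supersets:
  assumes "finite S" "Poly_Mapping.keys a \<subseteq> S" "finite T" "Poly_Mapping.keys b \<subseteq> T"
  shows "a \<top> b = (\<Sum>M\<in>S. \<Sum>N\<in>T. scal (Poly_Mapping.lookup a M * Poly_Mapping.lookup b N) (top_forest M N))"
proof -
  have "a \<top> b = (\<Sum>M\<in>S. \<Sum>N\<in>Poly_Mapping.keys b. scal (Poly_Mapping.lookup a M * Poly_Mapping.lookup b N) (top_forest M N))"
    unfolding top_def by (rule sum.mono_neutral_left) (use assms in \<open>auto simp: in_keys_iff\<close>)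
  also have "\<dots> = (\<Sum>M\<in>S. \<Sum>N\<in>T. scal (Poly_Mapping.lookup a M * Poly_Mapping.lookup b N) (top_forest M N))"
    by (intro sum.cong refl sum.mono_neutral_left) (use assms in \<open>auto simp: in_keys_iff\<close>)
  finally show ?thesis .
qed

lemma top_add_left: "(a + a') \<top> b = a \<top> b + a' \<top> b"
  using keys_add[of a a']
  by (simp add: top_eq_sum_over_supersets[of "Poly_Mapping.keys a \<union> Poly_Mapping.keys a'" _ "Poly_Mapping.keys b"]
      lookup_add algebra_simps scal_add_left sum.distrib)

lemma top_add_right: "a \<top> (b + b') = a \<top> b + a \<top> b'"
  using keys_add[of b b']
  by (simp add: top_eq_sum_over_supersets[of "Poly_Mapping.keys a" _ "Poly_Mapping.keys b \<union> Poly_Mapping.keys b'"]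
      lookup_add algebra_simps scal_add_left sum.distrib)

lemma top_scal_left: "scal c a \<top> b = scal c (a \<top> b)"
  using keys_scal[of c a]
  by (simp add: top_eq_sum_over_supersets[of "Poly_Mapping.keys a" _ "Poly_Mapping.keys b"]
      scal_sum_right mult.assoc)

lemma top_scal_right: "a \<top> scal c b = scal c (a \<top> b)"
  using keys_scal[of c b]
  by (simp add: top_eq_sum_over_supersets[of "Poly_Mapping.keys a" _ "Poly_Mapping.keys b"]
      scal_sum_right mult_ac)

lemma top_zero_left [simp]: "0 \<top> b = 0"
  by (simp add: top_def)

lemma top_zero_right [simp]: "a \<top> 0 = 0"
  by (simp add: top_def)

lemma top_sum_left: "sum f A \<top> b = (\<Sum>x\<in>A. f x \<top> b)"
  by (induction A rule: infinite_finite_induct) (auto simp: top_add_left)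

lemma top_sum_right: "a \<top> sum f A = (\<Sum>x\<in>A. a \<top> f x)"
  by (induction A rule: infinite_finite_induct) (auto simp: top_add_right)

lemma Dset_single: "[x] \<in> Dset a b \<longleftrightarrow> x = (a, b) \<and> a \<le> b"
  by (cases x) (auto simp: Dset_def)

lemma Dset_Cons_Cons:
  "x # y # r \<in> Dset a b \<longleftrightarrow> fst x = a \<and> fst x \<le> snd x \<and> y # r \<in> Dset (Suc (snd x)) b"
proof -
  have "(\<forall>k. Suc k < length (x # y # r) \<longrightarrow> fst ((x # y # r) ! Suc k) = Suc (snd ((x # y # r) ! k)))
    \<longleftrightarrow> fst y = Suc (snd x) \<and>
      (\<forall>k. Suc k < length (y # r) \<longrightarrow> fst ((y # r) ! Suc k) = Suc (snd ((y # r) ! k)))"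
    by (metis (no_types, lifting) Suc_less_eq length_Cons nat.exhaust nth_Cons_0 nth_Cons_Suc zero_less_Suc)
  then show ?thesis
    by (auto simp: Dset_def All_less_Suc2)
qed

lemma Nil_notin_Dset [simp]: "[] \<notin> Dset a b"
  by (simp add: Dset_def)

lemma Dset_le: "xs \<in> Dset a b \<Longrightarrow> a \<le> b"
  by (induction xs arbitrary: a rule: induct_list012) (fastforce simp: Dset_single Dset_Cons_Cons)+

lemma Dset_iff:
  "xs \<in> Dset a b \<longleftrightarrow>
     (xs = [(a, b)] \<and> a \<le> b) \<or> (\<exists>m r. xs = (a, m) # r \<and> a \<le> m \<and> m < b \<and> r \<in> Dset (Suc m) b)"
proof (cases xs)
  case (Cons x r)
  then show ?thesis
    by (cases r; cases x) (auto simp: Dset_single Dset_Cons_Cons Suc_le_eq dest: Dset_le)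
qed simp

lemma Dset_rec:
  assumes "a \<le> b"
  shows "Dset a b = insert [(a, b)] (\<Union>m\<in>{a..<b}. (#) (a, m) ` Dset (Suc m) b)"
  unfolding set_eq_iff Dset_iff[of _ a b] using assms by fastforce

lemma finite_Dset: "finite (Dset a b)"
proof (induction "Suc b - a" arbitrary: a rule: less_induct)
  case less
  show ?case
  proof (cases "a \<le> b")
    case True
    then show ?thesis by (subst Dset_rec) (auto intro!: finite_imageI less)
  next
    case False
    then have "Dset a b = {}" using Dset_le by fastforce
    then show ?thesis by simp
  qed
qed

lemma top_iter_Cons_Dset: "r \<in> Dset a b \<Longrightarrow> top_iter p (x # r) = top_iter p r \<top> p (fst x) (snd x)"
  by (cases r) auto

text \<open>Split off the first interval of a partition.\<close>
lemma coef_rec: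
  assumes "j < i"
  shows "coef p i j = p (Suc j) i + (\<Sum>m\<in>{Suc j..<i}. coef p i m \<top> p (Suc j) m)"
proof -
  let ?D = "\<lambda>m. (#) (Suc j, m) ` Dset (Suc m) i"
  have "coef p i j = top_iter p [(Suc j, i)] + sum (top_iter p) (\<Union>m\<in>{Suc j..<i}. ?D m)"
    using assms by (simp add: coef_def Dset_rec[of "Suc j" i]) (subst sum.insert, auto simp: finite_Dset)
  also have "sum (top_iter p) (\<Union>m\<in>{Suc j..<i}. ?D m) = (\<Sum>m\<in>{Suc j..<i}. sum (top_iter p) (?D m))"
    by (rule sum.UNION_disjoint) (auto simp: finite_Dset)
  also have "\<dots> = (\<Sum>m\<in>{Suc j..<i}. coef p i m \<top> p (Suc j) m)"
    by (intro sum.cong refl, subst sum.reindex)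
      (auto simp: coef_def top_sum_left top_iter_Cons_Dset intro!: sum.cong)
  finally show ?thesis by simp
qed

definition rat_mat_mult :: "nat \<Rightarrow> (nat \<Rightarrow> nat \<Rightarrow> rat) \<Rightarrow> (nat \<Rightarrow> nat \<Rightarrow> rat) \<Rightarrow> nat \<Rightarrow> nat \<Rightarrow> rat" where
  "rat_mat_mult n g h r c = (\<Sum>k\<le>n. g r k * h k c)"

definition mat_lmult :: "nat \<Rightarrow> (nat \<Rightarrow> nat \<Rightarrow> rat) \<Rightarrow> (nat \<Rightarrow> nat \<Rightarrow> HR) \<Rightarrow> nat \<Rightarrow> nat \<Rightarrow> HR" where
  "mat_lmult n g X r c = (\<Sum>k\<le>n. scal (g r k) (X k c))"

definition mat_rmult :: "nat \<Rightarrow> (nat \<Rightarrow> nat \<Rightarrow> HR) \<Rightarrow> (nat \<Rightarrow> nat \<Rightarrow> rat) \<Rightarrow> nat \<Rightarrow> nat \<Rightarrow> HR" where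
  "mat_rmult n X h r c = (\<Sum>k\<le>n. scal (h k c) (X r k))"

lemma mat_inverse_on_sym: "mat_inverse_on I g h \<Longrightarrow> mat_inverse_on I h g"
  unfolding mat_inverse_on_def by blast

lemma mat_inverse_on_rat_mat_mult:
  "mat_inverse_on {..n} g h \<Longrightarrow> r \<le> n \<Longrightarrow> c \<le> n \<Longrightarrow> rat_mat_mult n g h r c = (if r = c then 1 else 0)"
  by (simp add: mat_inverse_on_def rat_mat_mult_def)

lemma conj_mat_eq_rmult_lmult: "conj_mat n g X h = mat_rmult n (mat_lmult n g X) h"
  unfolding conj_mat_def mat_rmult_def mat_lmult_def
  by (intro ext) (simp add: scal_sum_right mult.commute[of "h _ _"], rule sum.swap)

lemma mat_lmult_rmult_commute: "mat_lmult n g (mat_rmult n X h) = mat_rmult n (mat_lmult n g X) h"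
  unfolding mat_rmult_def mat_lmult_def
  by (intro ext) (simp add: scal_sum_right mult.commute[of "h _ _"], rule sum.swap)

lemma mat_lmult_lmult: "mat_lmult n g (mat_lmult n g' X) = mat_lmult n (rat_mat_mult n g g') X"
  unfolding mat_lmult_def rat_mat_mult_def
  by (intro ext) (simp add: scal_sum_right scal_sum_left, rule sum.swap)

lemma mat_rmult_rmult: "mat_rmult n (mat_rmult n X h) h' = mat_rmult n X (rat_mat_mult n h h')"
  unfolding mat_rmult_def rat_mat_mult_def
  by (intro ext) (simp add: scal_sum_right scal_sum_left mult.commute[of "h' _ _"], rule sum.swap)

lemma mat_lmult_unit:
  assumes "\<And>k. k \<le> n \<Longrightarrow> e r k = (if r = k then 1 else 0)" and "r \<le> n"
  shows "mat_lmult n e X r c = X r c"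
  using assms by (simp add: mat_lmult_def if_distrib[of "\<lambda>a. scal a _"] cong: if_cong)

lemma mat_rmult_unit:
  assumes "\<And>k. k \<le> n \<Longrightarrow> e k c = (if k = c then 1 else 0)" and "c \<le> n"
  shows "mat_rmult n X e r c = X r c"
  using assms by (simp add: mat_rmult_def if_distrib[of "\<lambda>a. scal a _"] cong: if_cong)

lemma mat_lmult_cong: "(\<And>k. k \<le> n \<Longrightarrow> X k c = Y k c) \<Longrightarrow> mat_lmult n g X r c = mat_lmult n g Y r c"
  by (simp add: mat_lmult_def)

lemma mat_rmult_cong: "(\<And>k. k \<le> n \<Longrightarrow> X r k = Y r k) \<Longrightarrow> mat_rmult n X h r c = mat_rmult n Y h r c"
  by (simp add: mat_rmult_def)

lemma intertwining_iff_conj_mat: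
  assumes inv: "mat_inverse_on {..n} g h"
  shows "(\<forall>r\<le>n. \<forall>c\<le>n. mat_rmult n Y g r c = mat_lmult n g X r c) \<longleftrightarrow>
         (\<forall>r\<le>n. \<forall>c\<le>n. Y r c = conj_mat n g X h r c)"
proof (intro iffI allI impI)
  fix r c assume YX: "\<forall>r\<le>n. \<forall>c\<le>n. mat_rmult n Y g r c = mat_lmult n g X r c" and rc: "r \<le> n" "c \<le> n"
  have "Y r c = mat_rmult n Y (rat_mat_mult n g h) r c"
    using rc by (simp add: mat_rmult_unit mat_inverse_on_rat_mat_mult[OF inv])
  also have "\<dots> = mat_rmult n (mat_lmult n g X) h r c"
    unfolding mat_rmult_rmult[symmetric] using YX rc by (intro mat_rmult_cong) simp
  finally show "Y r c = conj_mat n g X h r c"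
    by (simp add: conj_mat_eq_rmult_lmult)
next
  fix r c assume YX: "\<forall>r\<le>n. \<forall>c\<le>n. Y r c = conj_mat n g X h r c" and rc: "r \<le> n" "c \<le> n"
  have "mat_rmult n Y g r c = mat_rmult n (mat_rmult n (mat_lmult n g X) h) g r c"
    using YX rc by (intro mat_rmult_cong) (simp add: conj_mat_eq_rmult_lmult)
  also have "\<dots> = mat_lmult n g X r c"
    using rc by (simp add: mat_rmult_rmult mat_rmult_unit mat_inverse_on_rat_mat_mult[OF mat_inverse_on_sym[OF inv]])
  finally show "mat_rmult n Y g r c = mat_lmult n g X r c" .
qed

lemma conj_mat_inverse:
  assumes inv: "mat_inverse_on {..n} g h"
    and Y: "\<forall>r\<le>n. \<forall>c\<le>n. Y r c = conj_mat n g X h r c"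
  shows "\<forall>r\<le>n. \<forall>c\<le>n. X r c = conj_mat n h Y g r c"
  unfolding intertwining_iff_conj_mat[OF mat_inverse_on_sym[OF inv], symmetric]
proof (intro allI impI)
  fix r c assume rc: "r \<le> n" "c \<le> n"
  have "mat_lmult n h Y r c = mat_lmult n h (mat_lmult n g (mat_rmult n X h)) r c"
    using Y rc by (intro mat_lmult_cong) (simp add: conj_mat_eq_rmult_lmult mat_lmult_rmult_commute)
  also have "\<dots> = mat_rmult n X h r c"
    using rc by (simp add: mat_lmult_lmult mat_lmult_unit mat_inverse_on_rat_mat_mult[OF mat_inverse_on_sym[OF inv]])
  finally show "mat_rmult n X h r c = mat_lmult n h Y r c" by simp
qed

definition top_mult :: "nat \<Rightarrow> (nat \<Rightarrow> nat \<Rightarrow> HR) \<Rightarrow> (nat \<Rightarrow> nat \<Rightarrow> HR) \<Rightarrow> nat \<Rightarrow> nat \<Rightarrow> HR" where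
  "top_mult n Q X j i = (\<Sum>m\<le>n. X m i \<top> Q j m)"

lemma top_mult_lmult_left: "top_mult n (mat_lmult n g Q) X = mat_lmult n g (top_mult n Q X)"
  unfolding top_mult_def mat_lmult_def
  by (intro ext) (simp add: top_sum_right top_scal_right scal_sum_right, rule sum.swap)

lemma top_mult_rmult_right: "top_mult n Q (mat_rmult n X h) = mat_rmult n (top_mult n Q X) h"
  unfolding top_mult_def mat_rmult_def
  by (intro ext) (simp add: top_sum_left top_scal_left scal_sum_right, rule sum.swap)

lemma top_mult_lmult_right: "top_mult n Q (mat_lmult n g X) = top_mult n (mat_rmult n Q g) X"
  unfolding top_mult_def mat_rmult_def mat_lmult_def
  by (intro ext) (simp add: top_sum_left top_sum_right top_scal_left top_scal_right, rule sum.swap)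

lemma top_mult_cong: "(\<And>m. m \<le> n \<Longrightarrow> Q j m = Q' j m) \<Longrightarrow> top_mult n Q X j i = top_mult n Q' X j i"
  by (simp add: top_mult_def)

lemma top_mult_conj_mat:
  assumes inv: "mat_inverse_on {..n} g h"
  shows "top_mult n (conj_mat n g Q h) (conj_mat n g X h) = conj_mat n g (top_mult n Q X) h"
proof -
  have "top_mult n (mat_rmult n Q (rat_mat_mult n h g)) X = top_mult n Q X"
    by (intro ext top_mult_cong mat_rmult_unit)
      (simp_all add: mat_inverse_on_rat_mat_mult[OF mat_inverse_on_sym[OF inv]])
  then show ?thesis
    by (simp add: conj_mat_eq_rmult_lmult mat_lmult_rmult_commute[symmetric] top_mult_lmult_left
        top_mult_rmult_right top_mult_lmult_right mat_rmult_rmult)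
qed

lemma conj_mat_cong:
  "(\<And>k l. k \<le> n \<Longrightarrow> l \<le> n \<Longrightarrow> X k l = Y k l) \<Longrightarrow> conj_mat n g X h r c = conj_mat n g Y h r c"
  by (simp add: conj_mat_def)

lemma conj_mat_add: "conj_mat n g (\<lambda>k l. X k l + Y k l) h r c = conj_mat n g X h r c + conj_mat n g Y h r c"
  by (simp add: conj_mat_def scal_add_right sum.distrib)

text \<open>For strictly upper triangular \<open>Q\<close> the equation \<open>X = Q + X \<top> Q\<close> has exactly one
  solution, the geometric series of \<open>Q\<close> for the product \<open>\<top>\<close>.\<close>
definition top_series :: "nat \<Rightarrow> (nat \<Rightarrow> nat \<Rightarrow> HR) \<Rightarrow> (nat \<Rightarrow> nat \<Rightarrow> HR) \<Rightarrow> bool" where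
  "top_series n Q X \<longleftrightarrow> (\<forall>j\<le>n. \<forall>i\<le>n. X j i = Q j i + top_mult n Q X j i)"

lemma top_series_cong:
  assumes "top_series n Q X"
    and "\<And>j i. j \<le> n \<Longrightarrow> i \<le> n \<Longrightarrow> Q j i = Q' j i" "\<And>j i. j \<le> n \<Longrightarrow> i \<le> n \<Longrightarrow> X j i = X' j i"
  shows "top_series n Q' X'"
  using assms unfolding top_series_def top_mult_def by (auto intro!: sum.cong)

lemma top_series_conj_mat:
  assumes inv: "mat_inverse_on {..n} g h" and QX: "top_series n Q X"
  shows "top_series n (conj_mat n g Q h) (conj_mat n g X h)"
  unfolding top_series_def
proof (intro allI impI)
  fix j i assume "j \<le> n" "i \<le> n"
  have "conj_mat n g X h j i = conj_mat n g (\<lambda>k l. Q k l + top_mult n Q X k l) h j i"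
    using QX unfolding top_series_def by (intro conj_mat_cong) simp
  then show "conj_mat n g X h j i = conj_mat n g Q h j i + top_mult n (conj_mat n g Q h) (conj_mat n g X h) j i"
    by (simp add: conj_mat_add top_mult_conj_mat[OF inv])
qed

lemma top_series_unique_solution:
  assumes X: "top_series n Q X" and Y: "top_series n Q Y" and Q: "\<And>j m. m \<le> j \<Longrightarrow> Q j m = 0"
  shows "j \<le> n \<Longrightarrow> i \<le> n \<Longrightarrow> X j i = Y j i"
proof (induction "n - j" arbitrary: j rule: less_induct)
  case less
  have "top_mult n Q X j i = top_mult n Q Y j i"
    unfolding top_mult_def
  proof (rule sum.cong[OF refl])
    fix m assume "m \<in> {..n}"
    then show "X m i \<top> Q j m = Y m i \<top> Q j m"
      using less by (cases "m \<le> j") (simp_all add: Q)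
  qed
  then show ?case using X Y less.prems unfolding top_series_def by metis
qed

lemma top_series_unique_data:
  assumes Q1: "top_series n Q1 X" and Q2: "top_series n Q2 X" and X: "\<And>m i. i \<le> m \<Longrightarrow> X m i = 0"
  shows "j \<le> n \<Longrightarrow> i \<le> n \<Longrightarrow> Q1 j i = Q2 j i"
proof (induction i arbitrary: j rule: less_induct)
  case (less i)
  have "top_mult n Q1 X j i = top_mult n Q2 X j i"
    unfolding top_mult_def
  proof (rule sum.cong[OF refl])
    fix m assume "m \<in> {..n}"
    then show "X m i \<top> Q1 j m = X m i \<top> Q2 j m"
      using less by (cases "i \<le> m") (simp_all add: X)
  qed
  then show ?case using Q1 Q2 less.prems unfolding top_series_def by (metis add_right_cancel)
qed

text \<open>The coefficient of \<open>e\<^sub>j\<close> in \<open>\<Delta>(e\<^sub>i)\<close> for \<open>j < i\<close>, stored at \<open>(j, i)\<close>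
  like the entries of the associated matrix.\<close>
definition coef_mat :: "(nat \<Rightarrow> nat \<Rightarrow> HR) \<Rightarrow> nat \<Rightarrow> nat \<Rightarrow> HR" where
  "coef_mat p j i = (if j < i then coef p i j else 0)"

lemma top_series_coef_mat: "top_series n (assoc_mat p) (coef_mat p)"
  unfolding top_series_def
proof (intro allI impI)
  fix j i assume "j \<le> n" "i \<le> n"
  show "coef_mat p j i = assoc_mat p j i + top_mult n (assoc_mat p) (coef_mat p) j i"
  proof (cases "j < i")
    case True
    have "top_mult n (assoc_mat p) (coef_mat p) j i = (\<Sum>m\<in>{..n} \<inter> {Suc j..<i}. coef p i m \<top> p (Suc j) m)"
      unfolding top_mult_def sum.inter_restrict[OF finite_atMost]
      by (rule sum.cong) (auto simp: coef_mat_def assoc_mat_def)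
    also have "{..n} \<inter> {Suc j..<i} = {Suc j..<i}"
      using \<open>i \<le> n\<close> by auto
    finally show ?thesis
      using True coef_rec[OF True, of p] by (simp add: coef_mat_def[of p j i] assoc_mat_def[of p j i])
  next
    case False
    then show ?thesis
      by (simp add: coef_mat_def assoc_mat_def top_mult_def sum.neutral)
  qed
qed

lemma coef_mat_conj_iff_assoc_mat_conj:
  assumes inv: "mat_inverse_on {..n} g h"
  shows "(\<forall>r\<le>n. \<forall>c\<le>n. coef_mat p' r c = conj_mat n g (coef_mat p) h r c) \<longleftrightarrow>
         (\<forall>r\<le>n. \<forall>c\<le>n. assoc_mat p' r c = conj_mat n g (assoc_mat p) h r c)"
proof -
  have conj: "top_series n (conj_mat n g (assoc_mat p) h) (conj_mat n g (coef_mat p) h)"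
    by (rule top_series_conj_mat[OF inv top_series_coef_mat])
  show ?thesis
  proof (intro iffI allI impI)
    fix r c assume "\<forall>r\<le>n. \<forall>c\<le>n. coef_mat p' r c = conj_mat n g (coef_mat p) h r c" "r \<le> n" "c \<le> n"
    then show "assoc_mat p' r c = conj_mat n g (assoc_mat p) h r c"
      using top_series_unique_data[OF top_series_coef_mat top_series_cong[OF conj]]
      by (simp add: coef_mat_def)
  next
    fix r c assume "\<forall>r\<le>n. \<forall>c\<le>n. assoc_mat p' r c = conj_mat n g (assoc_mat p) h r c" "r \<le> n" "c \<le> n"
    then show "coef_mat p' r c = conj_mat n g (coef_mat p) h r c"
      using top_series_unique_solution[OF top_series_coef_mat top_series_cong[OF conj]]
      by (simp add: assoc_mat_def)
  qed
qed

lemma Cspace_iff: "x \<in> Cspace n \<longleftrightarrow> (\<forall>k>n. Poly_Mapping.lookup x k = 0)"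
  by (auto simp: Cspace_def in_keys_iff not_le[symmetric])

lemma Cspace_single: "j \<le> n \<Longrightarrow> Poly_Mapping.single j 1 \<in> Cspace n"
  by (simp add: Cspace_iff lookup_single when_def)

lemma Cspace_add: "x \<in> Cspace n \<Longrightarrow> y \<in> Cspace n \<Longrightarrow> x + y \<in> Cspace n"
  by (simp add: Cspace_iff lookup_add)

lemma Cspace_scal: "x \<in> Cspace n \<Longrightarrow> scal c x \<in> Cspace n"
  by (simp add: Cspace_iff)

lemma Cspace_sum: "(\<And>a. a \<in> A \<Longrightarrow> f a \<in> Cspace n) \<Longrightarrow> sum f A \<in> Cspace n"
  by (simp add: Cspace_iff lookup_sum)

lemma Cspace_eq_sum_basis:
  "x \<in> Cspace n \<Longrightarrow> x = (\<Sum>j\<le>n. scal (Poly_Mapping.lookup x j) (Poly_Mapping.single j 1))"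
  by (rule poly_mapping_eqI)
    (auto simp: Cspace_iff lookup_sum lookup_single when_def not_le if_distrib[of "\<lambda>b. _ * b"] cong: if_cong)

lemma lookup_tensC: "Poly_Mapping.lookup (tensC h x) (F, k) = Poly_Mapping.lookup h F * Poly_Mapping.lookup x k"
proof -
  have "Poly_Mapping.lookup (tensC h x) (F, k) =
    (\<Sum>F'\<in>Poly_Mapping.keys h. if F' = F then \<Sum>j\<in>Poly_Mapping.keys x. if j = k then Poly_Mapping.lookup h F * Poly_Mapping.lookup x k else 0 else 0)"
    unfolding tensC_def lookup_sum by (intro sum.cong refl) (auto simp: lookup_single when_def)
  then show ?thesis
    by (simp add: sum.delta' in_keys_iff)
qed

lemma coef_above: "i < k \<Longrightarrow> coef p i k = 0"
  by (simp add: coef_def)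

lemma lookup_coact_basis: "Poly_Mapping.lookup (coact_basis p i) (F, k) = Poly_Mapping.lookup (coef p i k) F"
  by (cases "k \<le> i")
    (auto simp: coact_basis_def lookup_sum lookup_tensC lookup_single when_def coef_above
      if_distrib[of "\<lambda>b. _ * b"] cong: if_cong)

lemma lookup_coact:
  assumes "x \<in> Cspace n"
  shows "Poly_Mapping.lookup (coact p x) (F, k) =
    (\<Sum>i\<le>n. Poly_Mapping.lookup x i * Poly_Mapping.lookup (coef p i k) F)"
proof -
  have "Poly_Mapping.keys x \<subseteq> {..n}"
    using assms by (simp add: Cspace_def)
  then show ?thesis
    by (simp add: coact_def lookup_sum lookup_coact_basis)
      (rule sum.mono_neutral_left, auto simp: in_keys_iff)
qed

definition mat_of_lin :: "((nat \<Rightarrow>\<^sub>0 rat) \<Rightarrow> (nat \<Rightarrow>\<^sub>0 rat)) \<Rightarrow> nat \<Rightarrow> nat \<Rightarrow> rat" where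
  "mat_of_lin \<phi> k j = Poly_Mapping.lookup (\<phi> (Poly_Mapping.single j 1)) k"

lemma lookup_id_tens:
  assumes y: "\<And>F j. n < j \<Longrightarrow> Poly_Mapping.lookup y (F, j) = 0"
  shows "Poly_Mapping.lookup (id_tens \<phi> y) (F, k) = (\<Sum>j\<le>n. Poly_Mapping.lookup y (F, j) * mat_of_lin \<phi> k j)"
proof -
  define G where "G z = Poly_Mapping.lookup y z * (if fst z = F then mat_of_lin \<phi> k (snd z) else 0)" for z
  have "Poly_Mapping.lookup (id_tens \<phi> y) (F, k) = (\<Sum>z\<in>Poly_Mapping.keys y. G z)"
    unfolding id_tens_def lookup_sum
    by (intro sum.cong refl) (auto simp: G_def lookup_tensC lookup_single when_def mat_of_lin_def)
  also have "\<dots> = (\<Sum>z\<in>Pair F ` {..n}. G z)"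
    by (rule sum.same_carrierI[where C = "Poly_Mapping.keys y \<union> Pair F ` {..n}"])
      (force simp: G_def in_keys_iff y not_le image_iff)+
  also have "\<dots> = (\<Sum>j\<le>n. G (F, j))"
    by (subst sum.reindex) (auto simp: inj_on_def)
  finally show ?thesis
    by (simp add: G_def)
qed

lemma lin_zero: "lin_on n \<phi> \<Longrightarrow> \<phi> 0 = 0"
  unfolding lin_on_def by (metis Cspace_iff lookup_zero scal_zero_left)

lemma lin_sum:
  assumes "lin_on n \<phi>" "\<And>a. a \<in> A \<Longrightarrow> f a \<in> Cspace n"
  shows "\<phi> (sum f A) = (\<Sum>a\<in>A. \<phi> (f a))"
  using assms(2)
proof (induction A rule: infinite_finite_induct)
  case (insert a A)
  then show ?case
    using assms(1) unfolding lin_on_def by (simp add: Cspace_sum)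
qed (simp_all add: lin_zero[OF assms(1)])

lemma lookup_lin:
  assumes lin: "lin_on n \<phi>" and x: "x \<in> Cspace n"
  shows "Poly_Mapping.lookup (\<phi> x) k = (\<Sum>j\<le>n. Poly_Mapping.lookup x j * mat_of_lin \<phi> k j)"
proof -
  have "\<phi> x = (\<Sum>j\<le>n. \<phi> (scal (Poly_Mapping.lookup x j) (Poly_Mapping.single j 1)))"
    by (subst Cspace_eq_sum_basis[OF x], rule lin_sum[OF lin]) (simp add: Cspace_scal Cspace_single)
  also have "\<dots> = (\<Sum>j\<le>n. scal (Poly_Mapping.lookup x j) (\<phi> (Poly_Mapping.single j 1)))"
    using lin unfolding lin_on_def by (simp add: Cspace_single)
  finally show ?thesis
    by (simp add: lookup_sum mat_of_lin_def)
qed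

lemma lin_inv_into:
  assumes lin: "lin_on n \<phi>" and bij: "bij_betw \<phi> (Cspace n) (Cspace n)"
  shows "lin_on n (inv_into (Cspace n) \<phi>)"
proof -
  let ?\<psi> = "inv_into (Cspace n) \<phi>"
  have into: "\<And>x. x \<in> Cspace n \<Longrightarrow> ?\<psi> x \<in> Cspace n"
    using bij by (metis bij_betw_def inv_into_into)
  have right_inv: "\<And>x. x \<in> Cspace n \<Longrightarrow> \<phi> (?\<psi> x) = x"
    using bij by (meson bij_betw_inv_into_right)
  have inj: "inj_on \<phi> (Cspace n)"
    using bij by (simp add: bij_betw_def)
  show ?thesis
    unfolding lin_on_def
  proof (intro conjI ballI allI)
    fix x y assume xy: "x \<in> Cspace n" "y \<in> Cspace n"
    show "?\<psi> (x + y) = ?\<psi> x + ?\<psi> y"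
    proof (rule inj_onD[OF inj])
      show "\<phi> (?\<psi> (x + y)) = \<phi> (?\<psi> x + ?\<psi> y)"
        using lin into right_inv xy Cspace_add unfolding lin_on_def by simp
    qed (simp_all add: into xy Cspace_add)
  next
    fix c x assume x: "x \<in> Cspace n"
    show "?\<psi> (scal c x) = scal c (?\<psi> x)"
    proof (rule inj_onD[OF inj])
      show "\<phi> (?\<psi> (scal c x)) = \<phi> (scal c (?\<psi> x))"
        using lin into right_inv x Cspace_scal unfolding lin_on_def by simp
    qed (simp_all add: into x Cspace_scal)
  qed
qed

lemma mat_inverse_on_mat_of_lin:
  assumes lin: "lin_on n \<phi>" and lin': "lin_on n \<psi>"
    and maps: "\<And>x. x \<in> Cspace n \<Longrightarrow> \<phi> x \<in> Cspace n" "\<And>x. x \<in> Cspace n \<Longrightarrow> \<psi> x \<in> Cspace n"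
    and inv: "\<And>x. x \<in> Cspace n \<Longrightarrow> \<phi> (\<psi> x) = x" "\<And>x. x \<in> Cspace n \<Longrightarrow> \<psi> (\<phi> x) = x"
  shows "mat_inverse_on {..n} (mat_of_lin \<phi>) (mat_of_lin \<psi>)"
proof -
  have "(\<Sum>k\<le>n. mat_of_lin \<phi> r k * mat_of_lin \<psi> k c) = (if r = c then 1 else 0)"
    if "lin_on n \<phi>" "\<And>x. x \<in> Cspace n \<Longrightarrow> \<psi> x \<in> Cspace n" "\<And>x. x \<in> Cspace n \<Longrightarrow> \<phi> (\<psi> x) = x"
      "c \<le> n" for \<phi> \<psi> r c
    using lookup_lin[OF that(1) that(2)[OF Cspace_single], of c r] that(3,4)
    by (auto simp: Cspace_single mat_of_lin_def[of \<psi>] mult.commute lookup_single when_def split: if_splits)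
  from this[OF lin maps(2) inv(1)] this[OF lin' maps(1) inv(2)] show ?thesis
    unfolding mat_inverse_on_def by simp
qed

definition lin_of_mat :: "nat \<Rightarrow> (nat \<Rightarrow> nat \<Rightarrow> rat) \<Rightarrow> (nat \<Rightarrow>\<^sub>0 rat) \<Rightarrow> (nat \<Rightarrow>\<^sub>0 rat)" where
  "lin_of_mat n g x = (\<Sum>k\<le>n. Poly_Mapping.single k (\<Sum>j\<le>n. Poly_Mapping.lookup x j * g k j))"

lemma lookup_lin_of_mat:
  "Poly_Mapping.lookup (lin_of_mat n g x) k = (if k \<le> n then \<Sum>j\<le>n. Poly_Mapping.lookup x j * g k j else 0)"
  by (simp add: lin_of_mat_def lookup_sum lookup_single when_def)

lemma lin_on_lin_of_mat: "lin_on n (lin_of_mat n g)"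
  unfolding lin_on_def
  by (auto intro!: poly_mapping_eqI simp: lookup_lin_of_mat lookup_add algebra_simps sum.distrib sum_distrib_left)

lemma lin_of_mat_in_Cspace: "lin_of_mat n g x \<in> Cspace n"
  by (simp add: Cspace_iff lookup_lin_of_mat)

lemma mat_of_lin_lin_of_mat: "k \<le> n \<Longrightarrow> j \<le> n \<Longrightarrow> mat_of_lin (lin_of_mat n g) k j = g k j"
  by (simp add: mat_of_lin_def lookup_lin_of_mat lookup_single when_def if_distrib[of "\<lambda>a. a * _"] cong: if_cong)

lemma lin_of_mat_inverse:
  assumes "mat_inverse_on {..n} g h" and "x \<in> Cspace n"
  shows "lin_of_mat n h (lin_of_mat n g x) = x"
proof (rule poly_mapping_eqI)
  fix k
  have "(\<Sum>j\<le>n. (\<Sum>l\<le>n. Poly_Mapping.lookup x l * g j l) * h k j) =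
    (\<Sum>l\<le>n. Poly_Mapping.lookup x l * rat_mat_mult n h g k l)"
    by (simp add: rat_mat_mult_def sum_distrib_left sum_distrib_right mult_ac) (rule sum.swap)
  then show "Poly_Mapping.lookup (lin_of_mat n h (lin_of_mat n g x)) k = Poly_Mapping.lookup x k"
    using assms by (auto simp: lookup_lin_of_mat Cspace_iff mat_inverse_on_rat_mat_mult[OF mat_inverse_on_sym]
        if_distrib[of "\<lambda>b. _ * b"] cong: if_cong)
qed

lemma lookup_coact_comp_lin:
  assumes lin: "lin_on n \<phi>" and maps: "\<And>x. x \<in> Cspace n \<Longrightarrow> \<phi> x \<in> Cspace n" and x: "x \<in> Cspace n"
  shows "Poly_Mapping.lookup (coact p (\<phi> x)) (F, k) =
    (\<Sum>l\<le>n. Poly_Mapping.lookup x l * Poly_Mapping.lookup (\<Sum>i\<le>n. scal (mat_of_lin \<phi> i l) (coef p i k)) F)"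
  by (simp add: lookup_coact[OF maps[OF x]] lookup_lin[OF lin x] lookup_sum sum_distrib_left sum_distrib_right mult_ac)
    (rule sum.swap)

lemma lookup_id_tens_coact:
  assumes x: "x \<in> Cspace n"
  shows "Poly_Mapping.lookup (id_tens \<phi> (coact p x)) (F, k) =
    (\<Sum>l\<le>n. Poly_Mapping.lookup x l * Poly_Mapping.lookup (\<Sum>j\<le>n. scal (mat_of_lin \<phi> k j) (coef p l j)) F)"
proof -
  have vanish: "\<And>F j. n < j \<Longrightarrow> Poly_Mapping.lookup (coact p x) (F, j) = 0"
    by (simp add: lookup_coact[OF x] coef_above)
  show ?thesis
    by (simp add: lookup_id_tens[of n "coact p x", OF vanish] lookup_coact[OF x] lookup_sum sum_distrib_left sum_distrib_right mult_ac) (rule sum.swap)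
qed

lemma coef_eq_coef_mat: "coef p i k = coef_mat p k i + (if i = k then 1 else 0)"
  by (auto simp: coef_mat_def coef_def)

lemma comodule_hom_iff_basis:
  assumes lin: "lin_on n \<phi>" and maps: "\<And>x. x \<in> Cspace n \<Longrightarrow> \<phi> x \<in> Cspace n"
  shows "(\<forall>x\<in>Cspace n. coact p' (\<phi> x) = id_tens \<phi> (coact p x)) \<longleftrightarrow>
    (\<forall>l\<le>n. \<forall>k. (\<Sum>i\<le>n. scal (mat_of_lin \<phi> i l) (coef p' i k)) = (\<Sum>j\<le>n. scal (mat_of_lin \<phi> k j) (coef p l j)))"
    (is "?hom \<longleftrightarrow> (\<forall>l\<le>n. \<forall>k. ?A l k = ?B l k)")
proof (intro iffI allI impI ballI)
  fix l k assume ?hom and l: "l \<le> n"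
  show "?A l k = ?B l k"
  proof (rule poly_mapping_eqI)
    fix F
    have "Poly_Mapping.lookup (coact p' (\<phi> (Poly_Mapping.single l 1))) (F, k) =
      Poly_Mapping.lookup (id_tens \<phi> (coact p (Poly_Mapping.single l 1))) (F, k)"
      using \<open>?hom\<close> Cspace_single[OF l] by simp
    then show "Poly_Mapping.lookup (?A l k) F = Poly_Mapping.lookup (?B l k) F"
      using l by (simp add: lookup_coact_comp_lin[OF lin maps Cspace_single[OF l]]
          lookup_id_tens_coact[OF Cspace_single[OF l]] lookup_single when_def
          if_distrib[of "\<lambda>a. a * _"] cong: if_cong)
  qed
next
  fix x assume AB: "\<forall>l\<le>n. \<forall>k. ?A l k = ?B l k" and x: "x \<in> Cspace n"
  show "coact p' (\<phi> x) = id_tens \<phi> (coact p x)"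
  proof (rule poly_mapping_eqI, clarify)
    fix F k
    show "Poly_Mapping.lookup (coact p' (\<phi> x)) (F, k) = Poly_Mapping.lookup (id_tens \<phi> (coact p x)) (F, k)"
      using AB by (simp add: lookup_coact_comp_lin[OF lin maps x] lookup_id_tens_coact[OF x])
  qed
qed

lemma comodule_hom_iff_intertwining:
  assumes lin: "lin_on n \<phi>" and maps: "\<And>x. x \<in> Cspace n \<Longrightarrow> \<phi> x \<in> Cspace n"
  shows "(\<forall>x\<in>Cspace n. coact p' (\<phi> x) = id_tens \<phi> (coact p x)) \<longleftrightarrow>
    (\<forall>r\<le>n. \<forall>c\<le>n. mat_rmult n (coef_mat p') (mat_of_lin \<phi>) r c = mat_lmult n (mat_of_lin \<phi>) (coef_mat p) r c)"
proof -
  define A where "A l k = (\<Sum>i\<le>n. scal (mat_of_lin \<phi> i l) (coef p' i k))" for l k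
  define B where "B l k = (\<Sum>j\<le>n. scal (mat_of_lin \<phi> k j) (coef p l j))" for l k
  have hom_iff: "(\<forall>x\<in>Cspace n. coact p' (\<phi> x) = id_tens \<phi> (coact p x)) \<longleftrightarrow> (\<forall>l\<le>n. \<forall>k. A l k = B l k)"
    unfolding A_def B_def by (rule comodule_hom_iff_basis[OF lin maps])
  have "A l k = B l k" if "l \<le> n" "n < k" for l k
  proof -
    have "mat_of_lin \<phi> k j = 0" if "j \<le> n" for j
      using maps[OF Cspace_single[OF that]] \<open>n < k\<close> by (simp add: Cspace_iff mat_of_lin_def)
    then show ?thesis
      using that by (simp add: A_def B_def coef_above)
  qed
  then have "(\<forall>l\<le>n. \<forall>k. A l k = B l k) \<longleftrightarrow> (\<forall>l\<le>n. \<forall>k\<le>n. A l k = B l k)"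
    by (meson not_le)
  moreover have "A l k = mat_rmult n (coef_mat p') (mat_of_lin \<phi>) k l + scal (mat_of_lin \<phi> k l) 1"
    "B l k = mat_lmult n (mat_of_lin \<phi>) (coef_mat p) k l + scal (mat_of_lin \<phi> k l) 1" if "l \<le> n" "k \<le> n" for l k
    using that by (simp_all add: A_def B_def mat_rmult_def mat_lmult_def coef_eq_coef_mat scal_add_right
        sum.distrib if_distrib[of "scal _"] cong: if_cong)
  ultimately show ?thesis
    unfolding hom_iff by auto
qed

lemma comod_iso_iff_conj_assoc_mat:
  "comod_iso n p p' \<longleftrightarrow> (\<exists>g h. mat_inverse_on {..n} g h \<and>
     (\<forall>r\<le>n. \<forall>c\<le>n. assoc_mat p' r c = conj_mat n g (assoc_mat p) h r c))"
proof
  assume "comod_iso n p p'"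
  then obtain \<phi> where lin: "lin_on n \<phi>" and bij: "bij_betw \<phi> (Cspace n) (Cspace n)"
    and hom: "\<forall>x\<in>Cspace n. coact p' (\<phi> x) = id_tens \<phi> (coact p x)"
    unfolding comod_iso_def by blast
  let ?\<psi> = "inv_into (Cspace n) \<phi>"
  have maps: "\<And>x. x \<in> Cspace n \<Longrightarrow> \<phi> x \<in> Cspace n"
    using bij by (meson bij_betwE)
  have inv: "mat_inverse_on {..n} (mat_of_lin \<phi>) (mat_of_lin ?\<psi>)"
    using bij by (intro mat_inverse_on_mat_of_lin lin lin_inv_into maps)
      (auto simp: bij_betw_inv_into_left bij_betw_inv_into_right inv_into_into bij_betw_def)
  have "\<forall>r\<le>n. \<forall>c\<le>n. coef_mat p' r c = conj_mat n (mat_of_lin \<phi>) (coef_mat p) (mat_of_lin ?\<psi>) r c"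
    using hom by (simp add: comodule_hom_iff_intertwining[OF lin maps] intertwining_iff_conj_mat[OF inv])
  then show "\<exists>g h. mat_inverse_on {..n} g h \<and> (\<forall>r\<le>n. \<forall>c\<le>n. assoc_mat p' r c = conj_mat n g (assoc_mat p) h r c)"
    using inv coef_mat_conj_iff_assoc_mat_conj[OF inv] by blast
next
  assume "\<exists>g h. mat_inverse_on {..n} g h \<and> (\<forall>r\<le>n. \<forall>c\<le>n. assoc_mat p' r c = conj_mat n g (assoc_mat p) h r c)"
  then obtain g h where inv: "mat_inverse_on {..n} g h"
    and conj: "\<forall>r\<le>n. \<forall>c\<le>n. assoc_mat p' r c = conj_mat n g (assoc_mat p) h r c"
    by blast
  let ?\<phi> = "lin_of_mat n g"
  have bij: "bij_betw ?\<phi> (Cspace n) (Cspace n)"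
    by (rule bij_betw_byWitness[where f' = "lin_of_mat n h"])
      (auto simp: lin_of_mat_inverse inv mat_inverse_on_sym lin_of_mat_in_Cspace)
  have "\<forall>r\<le>n. \<forall>c\<le>n. mat_rmult n (coef_mat p') g r c = mat_lmult n g (coef_mat p) r c"
    using conj by (simp add: intertwining_iff_conj_mat[OF inv] coef_mat_conj_iff_assoc_mat_conj[OF inv])
  then have "\<forall>x\<in>Cspace n. coact p' (?\<phi> x) = id_tens ?\<phi> (coact p x)"
    by (simp add: comodule_hom_iff_intertwining[OF lin_on_lin_of_mat lin_of_mat_in_Cspace]
        mat_rmult_def mat_lmult_def mat_of_lin_lin_of_mat)
  then show "comod_iso n p p'"
    unfolding comod_iso_def using lin_on_lin_of_mat bij by blast
qed

lemma bstart_0 [simp]: "bstart cs 0 = 0"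
  by (simp add: bstart_def)

lemma bstart_mono: "i \<le> j \<Longrightarrow> bstart cs i \<le> bstart cs j"
  by (metis bstart_def le_add1 le_add_diff_inverse sum_list_append take_add)

lemma bstart_le_sum_list: "bstart cs i \<le> sum_list cs"
  by (metis append_take_drop_id bstart_def le_add1 sum_list_append)

lemma bstart_less_imp_less: "bstart cs i < bstart cs j \<Longrightarrow> i < j"
  by (meson bstart_mono leD le_less_linear)

lemma in_blk_le: "is_type n cs \<Longrightarrow> r \<in> blk cs a \<Longrightarrow> r \<le> n"
  using bstart_le_sum_list[of cs "Suc a"] by (auto simp: blk_def is_type_def)

lemma ex_crossing_step:
  fixes f :: "nat \<Rightarrow> 'a::linorder"
  assumes "f 0 \<le> c" "c < f m"
  shows "\<exists>b<m. f b \<le> c \<and> c < f (Suc b)"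
  using assms(2)
proof (induction m)
  case (Suc m)
  then show ?case
    by (cases "c < f m") (auto intro: less_SucI)
qed (use assms(1) in simp)

lemma is_type_find_blk:
  assumes "is_type n cs" "c \<le> n"
  shows "\<exists>b<length cs. c \<in> blk cs b"
  using ex_crossing_step[of "bstart cs" c "length cs"] assms
  by (simp add: blk_def is_type_def bstart_def)

lemma reduced_assoc_mat_below_superdiag:
  assumes red: "reduced_of_type n p cs" and "r \<le> n" "c \<le> n"
    and "bstart cs m \<le> r" "c < bstart cs (Suc m)"
  shows "assoc_mat p r c = 0"
proof -
  have ty: "is_type n cs"
    using red by (simp add: reduced_of_type_def)
  obtain a b where a: "a < length cs" "r \<in> blk cs a" and b: "b < length cs" "c \<in> blk cs b"
    using is_type_find_blk[OF ty] assms(2,3) by metis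
  have "bstart cs m < bstart cs (Suc a)" "bstart cs b < bstart cs (Suc m)"
    using a(2) b(2) assms(4,5) by (auto simp: blk_def)
  then have "b \<le> a"
    by (auto dest!: bstart_less_imp_less)
  moreover have "\<forall>a<length cs. \<forall>b<length cs. b \<le> a \<longrightarrow> (\<forall>r\<in>blk cs a. \<forall>c\<in>blk cs b. assoc_mat p r c = 0)"
    using red unfolding reduced_of_type_def by blast
  ultimately show ?thesis
    using a b by blast
qed

lemma reduced_kernel_block:
  assumes red: "reduced_of_type n p cs" and k: "1 \<le> k" "k < length cs"
    and ker: "\<And>r. r \<in> blk cs (k - 1) \<Longrightarrow> (\<Sum>c\<le>n. scal (x c) (assoc_mat p r c)) = 0"
    and above: "\<And>c. c \<le> n \<Longrightarrow> bstart cs (Suc k) \<le> c \<Longrightarrow> x c = 0"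
  shows "\<forall>c\<in>blk cs k. x c = 0"
proof -
  have ty: "is_type n cs"
    using red by (simp add: reduced_of_type_def)
  have "(\<Sum>c\<in>blk cs k. scal (x c) (assoc_mat p r c)) = 0" if r: "r \<in> blk cs (k - 1)" for r
  proof -
    have "r \<le> n" "bstart cs (k - 1) \<le> r" "Suc (k - 1) = k"
      using r k(1) in_blk_le[OF ty r] by (auto simp: blk_def)
    moreover have "blk cs k \<subseteq> {..n}"
      using in_blk_le[OF ty] by auto
    moreover have "scal (x c) (assoc_mat p r c) = 0" if "c \<le> n" "c \<notin> blk cs k" for c
      using that above reduced_assoc_mat_below_superdiag[OF red \<open>r \<le> n\<close> _ \<open>bstart cs (k - 1) \<le> r\<close>]
        \<open>Suc (k - 1) = k\<close> by (cases "c < bstart cs k") (auto simp: blk_def)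
    ultimately show ?thesis
      using ker[OF r] by (subst sum.mono_neutral_left[of "{..n}"]) auto
  qed
  then show ?thesis
    using red k unfolding reduced_of_type_def by blast
qed

lemma reduced_kernel:
  assumes red: "reduced_of_type n p cs"
    and ker: "\<And>r. r \<le> n \<Longrightarrow> bstart cs m \<le> r \<Longrightarrow> (\<Sum>c\<le>n. scal (x c) (assoc_mat p r c)) = 0"
    and "c \<le> n" "bstart cs (Suc m) \<le> c"
  shows "x c = 0"
proof -
  have ty: "is_type n cs" and sum_cs: "sum_list cs = Suc n"
    using red by (simp_all add: reduced_of_type_def is_type_def)
  have "\<forall>c\<le>n. bstart cs i \<le> c \<longrightarrow> x c = 0" if "Suc m \<le> i" "i \<le> length cs" for i
    using that(2)
  proof (induction rule: inc_induct)
    case base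
    then show ?case
      using sum_cs by (simp add: bstart_def)
  next
    case (step k)
    have "\<forall>c\<in>blk cs k. x c = 0"
    proof (rule reduced_kernel_block[OF red _ step.hyps(2)])
      fix r assume "r \<in> blk cs (k - 1)"
      moreover have "bstart cs m \<le> bstart cs (k - 1)"
        using \<open>Suc m \<le> i\<close> step.hyps(1) by (intro bstart_mono) simp
      ultimately show "(\<Sum>c\<le>n. scal (x c) (assoc_mat p r c)) = 0"
        using ker in_blk_le[OF ty] by (simp add: blk_def)
    qed (use step.IH \<open>Suc m \<le> i\<close> step.hyps(1) in auto)
    then show ?case
      using step.IH by (auto simp: blk_def not_le)
  qed
  then show ?thesis
    using assms(3,4) sum_cs by (cases "Suc m \<le> length cs") (auto simp: bstart_def)
qed

text \<open>\<open>g\<close> maps the span of \<open>e\<^sub>0, \<dots>, e\<^sub>b\<^sub>-\<^sub>1\<close>, \<open>b = bstart cs m\<close>, into the span of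
  \<open>e\<^sub>0, \<dots>, e\<^sub>b\<^sub>'\<^sub>-\<^sub>1\<close>, \<open>b' = bstart cs' m\<close>, for every \<open>m\<close>.\<close>
definition maps_flag :: "nat \<Rightarrow> nat list \<Rightarrow> nat list \<Rightarrow> (nat \<Rightarrow> nat \<Rightarrow> rat) \<Rightarrow> bool" where
  "maps_flag n cs cs' g \<longleftrightarrow> (\<forall>m j k. j < bstart cs m \<longrightarrow> bstart cs' m \<le> k \<longrightarrow> k \<le> n \<longrightarrow> g k j = 0)"

lemma maps_flagD: "maps_flag n cs cs' g \<Longrightarrow> j < bstart cs m \<Longrightarrow> bstart cs' m \<le> k \<Longrightarrow> k \<le> n \<Longrightarrow> g k j = 0"
  by (simp add: maps_flag_def)

lemma intertwining_maps_flag: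
  assumes red: "reduced_of_type n p cs" and red': "reduced_of_type n p' cs'"
    and comm: "\<forall>r\<le>n. \<forall>l\<le>n. mat_rmult n (assoc_mat p') g r l = mat_lmult n g (assoc_mat p) r l"
  shows "maps_flag n cs cs' g"
  unfolding maps_flag_def
proof (intro allI impI)
  fix m j k assume "j < bstart cs m" "bstart cs' m \<le> k" "k \<le> n"
  then show "g k j = 0"
  proof (induction m arbitrary: j k)
    case (Suc m)
    have j: "j \<le> n"
      using Suc.prems(1) bstart_le_sum_list[of cs "Suc m"] red
      by (simp add: reduced_of_type_def is_type_def)
    show ?case
    proof (rule reduced_kernel[OF red' _ Suc.prems(3,2)])
      fix r assume r: "r \<le> n" "bstart cs' m \<le> r"
      have "scal (g r k) (assoc_mat p k j) = 0" if "k \<le> n" for k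
        using Suc.IH[OF _ r(2) r(1)] reduced_assoc_mat_below_superdiag[OF red that j _ Suc.prems(1)]
        by (cases "bstart cs m \<le> k") auto
      then have "mat_lmult n g (assoc_mat p) r j = 0"
        by (simp add: mat_lmult_def)
      then show "(\<Sum>c\<le>n. scal (g c j) (assoc_mat p' r c)) = 0"
        using comm r(1) j by (simp add: mat_rmult_def)
    qed
  qed simp
qed

text \<open>Both sides are the trace of \<open>g h\<close> restricted to the first \<open>b\<close> coordinates, computed
  once as \<open>b\<close> and once, after moving \<open>h\<close> to the front, as \<open>a\<close>.\<close>
lemma inverse_triangular_cut_eq:
  assumes inv: "mat_inverse_on {..n} g h" and "a \<le> Suc n" "b \<le> Suc n"
    and g: "\<And>j k. j < a \<Longrightarrow> b \<le> k \<Longrightarrow> k \<le> n \<Longrightarrow> g k j = 0"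
    and h: "\<And>j k. j < b \<Longrightarrow> a \<le> k \<Longrightarrow> k \<le> n \<Longrightarrow> h k j = 0"
  shows "a = b"
proof -
  have sub: "{..<a} \<subseteq> {..n}" "{..<b} \<subseteq> {..n}"
    using assms(2,3) by auto
  have "(of_nat b :: rat) = (\<Sum>j<b. \<Sum>k\<le>n. g j k * h k j)"
    using inv sub unfolding mat_inverse_on_def by (simp add: subset_eq)
  also have "\<dots> = (\<Sum>j<b. \<Sum>k<a. g j k * h k j)"
    using sub h by (intro sum.cong refl sum.mono_neutral_right) auto
  also have "\<dots> = (\<Sum>k<a. \<Sum>j<b. h k j * g j k)"
    by (subst sum.swap) (simp add: mult.commute)
  also have "\<dots> = (\<Sum>k<a. \<Sum>j\<le>n. h k j * g j k)"
    using sub g by (intro sum.cong refl sum.mono_neutral_left) auto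
  also have "\<dots> = of_nat a"
    using inv sub unfolding mat_inverse_on_def by (simp add: subset_eq)
  finally show ?thesis
    by simp
qed

lemma bstart_Nil [simp]: "bstart [] m = 0"
  by (simp add: bstart_def)

lemma bstart_Cons_Suc [simp]: "bstart (x # xs) (Suc m) = x + bstart xs m"
  by (simp add: bstart_def)

lemma bstart_eq_imp_eq:
  assumes "\<forall>c\<in>set xs. 0 < c" "\<forall>c\<in>set ys. (0::nat) < c" "\<forall>m. bstart xs m = bstart ys m"
  shows "xs = ys"
  using assms
proof (induction xs arbitrary: ys)
  case Nil
  then show ?case
    by (cases ys) (auto dest: spec[of _ "Suc 0"])
next
  case (Cons x xs)
  then show ?case
  proof (cases ys)
    case (Cons y ys')
    have eq: "x + bstart xs m = y + bstart ys' m" for m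
      using Cons.prems(3) \<open>ys = y # ys'\<close> bstart_Cons_Suc by metis
    then have "x = y"
      using eq[of 0] by simp
    moreover from eq \<open>x = y\<close> have "\<forall>m. bstart xs m = bstart ys' m"
      by simp
    ultimately show ?thesis
      using Cons.prems(1,2) Cons.IH[of ys'] \<open>ys = y # ys'\<close> by simp
  qed (auto dest: spec[of _ "Suc 0"])
qed

lemma sum_blk_eq_sum_atMost:
  assumes ty: "is_type n cs" and f: "maps_flag n cs cs f" and f': "maps_flag n cs cs f'"
    and "r \<in> blk cs a" "c \<in> blk cs a"
  shows "(\<Sum>k\<in>blk cs a. f r k * f' k c) = (\<Sum>k\<le>n. f r k * f' k c)"
proof (rule sum.mono_neutral_left)
  show "blk cs a \<subseteq> {..n}"
    using in_blk_le[OF ty] by auto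
  show "\<forall>k\<in>{..n} - blk cs a. f r k * f' k c = 0"
  proof
    fix k assume k: "k \<in> {..n} - blk cs a"
    show "f r k * f' k c = 0"
    proof (cases "k < bstart cs a")
      case True
      then show ?thesis
        using maps_flagD[OF f True _ in_blk_le[OF ty assms(4)]] assms(4) by (simp add: blk_def)
    next
      case False
      then have "bstart cs (Suc a) \<le> k" "k \<le> n"
        using k by (auto simp: blk_def)
      then have "f' k c = 0"
        using maps_flagD[OF f', of c "Suc a" k] assms(5) by (simp add: blk_def)
      then show ?thesis
        by simp
    qed
  qed
qed simp

lemma maps_flag_in_Gtype:
  assumes ty: "is_type n cs" and inv: "mat_inverse_on {..n} g h"
    and g: "maps_flag n cs cs g" and h: "maps_flag n cs cs h"
  shows "g \<in> Gtype n cs"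
proof -
  have "g r c = 0" if "b < a" "r \<in> blk cs a" "c \<in> blk cs b" for a b r c
  proof -
    have "bstart cs (Suc b) \<le> bstart cs a"
      using that(1) by (intro bstart_mono) simp
    then show ?thesis
      using maps_flagD[OF g _ _ in_blk_le[OF ty that(2)], of c "Suc b"] that(2,3) by (simp add: blk_def)
  qed
  moreover have "mat_inverse_on (blk cs a) g h" for a
    using inv in_blk_le[OF ty]
    unfolding mat_inverse_on_def
    by (simp add: sum_blk_eq_sum_atMost[OF ty g h] sum_blk_eq_sum_atMost[OF ty h g])
  ultimately show ?thesis
    using inv unfolding Gtype_def by blast
qed

lemma conj_reduced_same_type:
  assumes red: "reduced_of_type n p cs" and red': "reduced_of_type n p' cs'"
    and inv: "mat_inverse_on {..n} g h"
    and conj: "\<forall>r\<le>n. \<forall>c\<le>n. assoc_mat p' r c = conj_mat n g (assoc_mat p) h r c"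
  shows "cs' = cs" and "g \<in> Gtype n cs"
proof -
  have ty: "is_type n cs" "is_type n cs'"
    using red red' by (simp_all add: reduced_of_type_def)
  have g: "maps_flag n cs cs' g"
    using conj by (intro intertwining_maps_flag[OF red red']) (simp add: intertwining_iff_conj_mat[OF inv])
  have h: "maps_flag n cs' cs h"
    using conj_mat_inverse[OF inv conj]
    by (intro intertwining_maps_flag[OF red' red]) (simp add: intertwining_iff_conj_mat[OF mat_inverse_on_sym[OF inv]])
  have "bstart cs m = bstart cs' m" for m
    using bstart_le_sum_list[of cs m] bstart_le_sum_list[of cs' m] ty
    by (intro inverse_triangular_cut_eq[OF inv] maps_flagD[OF g] maps_flagD[OF h]) (auto simp: is_type_def)
  then show "cs' = cs"
    using ty bstart_eq_imp_eq[of cs' cs] by (simp add: is_type_def)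
  then show "g \<in> Gtype n cs"
    using maps_flag_in_Gtype[OF ty(1) inv] g h by simp
qed

theorem theorem6p6:
  fixes n :: nat and p p' :: "nat \<Rightarrow> nat \<Rightarrow> HR" and cs :: "nat list"
  assumes "prim_family n p" and "prim_family n p'"
    and "reduced_of_type n p cs" and "is_reduced n p'"
  shows "comod_iso n p p' \<longleftrightarrow>
           (reduced_of_type n p' cs \<and>
            (\<exists>g\<in>Gtype n cs. \<exists>h. mat_inverse_on {..n} g h \<and>
               (\<forall>r\<le>n. \<forall>c\<le>n. assoc_mat p' r c = conj_mat n g (assoc_mat p) h r c)))"
proof
  assume "comod_iso n p p'"
  then obtain g h where inv: "mat_inverse_on {..n} g h"
    and conj: "\<forall>r\<le>n. \<forall>c\<le>n. assoc_mat p' r c = conj_mat n g (assoc_mat p) h r c"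
    by (auto simp: comod_iso_iff_conj_assoc_mat)
  obtain cs' where red': "reduced_of_type n p' cs'"
    using assms(4) unfolding is_reduced_def by blast
  show "reduced_of_type n p' cs \<and> (\<exists>g\<in>Gtype n cs. \<exists>h. mat_inverse_on {..n} g h \<and>
      (\<forall>r\<le>n. \<forall>c\<le>n. assoc_mat p' r c = conj_mat n g (assoc_mat p) h r c))"
    using conj_reduced_same_type[OF assms(3) red' inv conj] red' inv conj by auto
qed (auto simp: comod_iso_iff_conj_assoc_mat)

end
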